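(* Let $\varepsilon\in(0,1)$, $4\pi/5<a<\pi$ and $t_0>2\pi$. Then there exists $v\in(0,1)$ such that $T_0(Q,\Omega)<\infty$, where $Q=\{(t,x): t\ge0,\ x\in\omega(t)\}$ with $\omega(t)=\{(r,\theta):1-\varepsilon<r\le1,\ \theta_0(t)<\theta<a+\theta_0(t)\}$, $\theta_0(t)=0$ for $0\le t<t_0$ and $\theta_0(t)=v(t-t_0)$ for $t\ge t_0$.
   Context: $\Omega=\{(x,y)\in\mathbb{R}^2:x^2+y^2<1\}$ is the Euclidean unit disk, with polar coordinates $(r,\theta)$ (angles mod $2\pi$; wave equation with Dirichlet boundary condition). Rays (projections of generalized bicharacteristics, parametrized by time) are the curves $t\mapsto x(t)\in\overline\Omega$, $t\in\mathbb{R}$: unit-speed billiard trajectories (straight segments at unit speed reflecting specularly at the unit circle) and unit-speed motions along the unit circle in either direction (gliding rays). $(Q,T)$ satisfies the time-dependent geometric control condition if every ray admits $t\in(0,T)$ with $(t,x(t))\in Q$; $T_0(Q,\Omega)$ is the infimum of such $T>0$, $+\infty$ if none. *)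

theory Defs
  imports "HOL-Analysis.Analysis" "HOL-Library.Extended_Real"
begin

definition billiard_ray :: "(real \<Rightarrow> complex) \<Rightarrow> bool" where
  "billiard_ray x \<longleftrightarrow>
     continuous_on UNIV x \<and> (\<forall>t. norm (x t) \<le> 1) \<and>
     (\<exists>R :: real set.
        (\<forall>t\<in>R. norm (x t) = 1) \<and>
        (\<forall>a b. finite (R \<inter> {a..b})) \<and>
        (\<forall>a b. a < b \<and> {a<..<b} \<inter> R = {} \<longrightarrow>
            (\<exists>p v. norm v = 1 \<and> (\<forall>t\<in>{a<..<b}. x t = p + t *\<^sub>R v))) \<and>
        (\<forall>t\<in>R. \<exists>vm vp. (x has_vector_derivative vm) (at_left t) \<and>
                         (x has_vector_derivative vp) (at_right t) \<and>
                         vp = vm - (2 * (vm \<bullet> x t)) *\<^sub>R x t))"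

definition gliding_ray :: "(real \<Rightarrow> complex) \<Rightarrow> bool" where
  "gliding_ray x \<longleftrightarrow> (\<exists>c s. (s = 1 \<or> s = -1) \<and> (\<forall>t. x t = cis (c + s * t)))"

definition ray :: "(real \<Rightarrow> complex) \<Rightarrow> bool" where
  "ray x \<longleftrightarrow> billiard_ray x \<or> gliding_ray x"

definition GCC :: "(real \<times> complex) set \<Rightarrow> real \<Rightarrow> bool" where
  "GCC Q T \<longleftrightarrow> (\<forall>x. ray x \<longrightarrow> (\<exists>t\<in>{0<..<T}. (t, x t) \<in> Q))"

text \<open>Minimal control time (infimum in the extended reals; +\<infinity> if no T works).\<close>
definition T0 :: "(real \<times> complex) set \<Rightarrow> ereal" where
  "T0 Q = Inf {ereal T | T. T > 0 \<and> GCC Q T}"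

definition theta0 :: "real \<Rightarrow> real \<Rightarrow> real \<Rightarrow> real" where
  "theta0 t0 v t = (if t < t0 then 0 else v * (t - t0))"

definition moving_set :: "real \<Rightarrow> real \<Rightarrow> real \<Rightarrow> real \<Rightarrow> (real \<times> complex) set" where
  "moving_set \<epsilon> a t0 v = {(t, x). t \<ge> 0 \<and> 1 - \<epsilon> < norm x \<and> norm x \<le> 1 \<and>
      (\<exists>\<theta>. theta0 t0 v t < \<theta> \<and> \<theta> < a + theta0 t0 v t \<and> x = complex_of_real (norm x) * cis \<theta>)}"

end

theory Submission
  imports Defs
begin

text \<open>Take \<open>v = 19/20\<close> and look at a ray only at its reflection points (a gliding ray
  at integer times). A chord subtending the angle \<open>2\<phi>\<close> has length \<open>L = 2 sin \<phi>\<close>, so after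
  \<open>t0\<close>, in the frame of the rotating window, consecutive reflection points differ by the
  fixed angle \<open>2\<phi> - v L\<close>, and an arithmetic progression of angles enters the window within
  one turn. When this angle is near \<open>\<pi>\<close> one uses every second reflection point instead;
  that only fails for \<open>\<pi> - \<phi> \<in> [0.7, 0.88]\<close>, and such chords are so short that four
  reflection points occur before \<open>t0\<close>, while the window is still at rest.\<close>

lemma pi_bounds: "157/50 < pi" "pi < 3927/1250"
  using pi_approx by simp_all

lemma sin_taylor_bounds:
  fixes x :: real
  assumes "0 \<le> x"
  shows "x - x^3/6 \<le> sin x" "sin x \<le> x - x^3/6 + x^5/120"
proof -
  have "\<bar>sin x - (\<Sum>m<3. sin_coeff m * x ^ m)\<bar> \<le> inverse (fact 3) * \<bar>x\<bar> ^ 3"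
    by (rule Maclaurin_sin_bound)
  moreover have "(\<Sum>m<3. sin_coeff m * x ^ m) = x"
    by (simp add: numeral_eq_Suc sin_coeff_Suc cos_coeff_Suc)
  ultimately have "\<bar>sin x - x\<bar> \<le> x^3/6"
    using assms by (simp add: fact_numeral)
  then show "x - x^3/6 \<le> sin x" by linarith
  have "\<bar>sin x - (\<Sum>m<5. sin_coeff m * x ^ m)\<bar> \<le> inverse (fact 5) * \<bar>x\<bar> ^ 5"
    by (rule Maclaurin_sin_bound)
  moreover have "(\<Sum>m<5. sin_coeff m * x ^ m) = x - x^3/6"
    by (simp add: numeral_eq_Suc sin_coeff_Suc cos_coeff_Suc)
  ultimately have "\<bar>sin x - (x - x^3/6)\<bar> \<le> x^5/120"
    using assms by (simp add: fact_numeral)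
  then show "sin x \<le> x - x^3/6 + x^5/120" by linarith
qed

lemma sin_22_25_bounds: "383/500 \<le> sin (22/25::real)" "sin (22/25::real) \<le> 771/1000"
  using sin_taylor_bounds[of "22/25"] by (simp_all add: power_divide)

lemma abs_sin_diff_le: "\<bar>sin y - sin x\<bar> \<le> \<bar>y - x\<bar>" for x y :: real
proof -
  have "\<bar>sin y - sin x\<bar> = 2 * \<bar>sin ((y - x)/2)\<bar> * \<bar>cos ((y + x)/2)\<bar>"
    by (simp add: sin_diff_sin abs_mult)
  also have "\<dots> \<le> 2 * \<bar>(y - x)/2\<bar> * 1"
    by (intro mult_mono abs_sin_x_le_abs_x abs_cos_le_one) auto
  finally show ?thesis by simp
qed

lemma rotation_gap_from_half_turn:
  fixes \<psi> :: real
  assumes "0 < \<psi>" "\<psi> < 7/10 \<or> 22/25 < \<psi>"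
  shows "1/20 \<le> \<bar>pi - 2*\<psi> - 19/10 * sin \<psi>\<bar>"
  using assms(2)
proof
  assume "\<psi> < 7/10"
  moreover have "sin \<psi> \<le> \<psi>" using sin_x_le_x \<open>0 < \<psi>\<close> by simp
  ultimately show ?thesis using pi_bounds by linarith
next
  assume "22/25 < \<psi>"
  moreover have "sin (22/25) - sin \<psi> \<le> \<psi> - 22/25"
    using abs_sin_diff_le[of "22/25" \<psi>] \<open>22/25 < \<psi>\<close> by linarith
  ultimately show ?thesis using sin_22_25_bounds pi_bounds by linarith
qed

lemma exists_lattice_point_in_interval:
  fixes s b L :: real
  assumes "0 < L" "s \<le> b"
  shows "\<exists>k::nat. b < s + real k * L \<and> s + real k * L \<le> b + L"
proof -
  define y where "y = (b - s) / L"
  have "0 \<le> y" using assms unfolding y_def by simp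
  define k where "k = nat \<lfloor>y\<rfloor> + 1"
  have k: "y < real k" "real k \<le> y + 1"
    unfolding k_def using \<open>0 \<le> y\<close> by linarith+
  have "b - s < real k * L"
    using k(1) assms unfolding y_def by (simp add: divide_less_eq)
  moreover have "real k * L \<le> (y + 1) * L"
    using k(2) assms by (intro mult_right_mono) auto
  moreover have "(y + 1) * L = b - s + L"
    using assms unfolding y_def by (simp add: field_simps)
  ultimately show ?thesis by (intro exI[of _ k]) simp
qed

definition in_arc :: "real \<Rightarrow> real \<Rightarrow> bool" where
  "in_arc a \<theta> \<longleftrightarrow> (\<exists>m::int. 2*pi*m < \<theta> \<and> \<theta> < 2*pi*m + a)"

lemma in_arc_add_2pi_multiple: "in_arc a (\<theta> + 2*pi*j) \<longleftrightarrow> in_arc a \<theta>" for j :: int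
proof
  assume "in_arc a (\<theta> + 2*pi*j)"
  then obtain m :: int where "2*pi*m < \<theta> + 2*pi*j" "\<theta> + 2*pi*j < 2*pi*m + a"
    unfolding in_arc_def by blast
  then show "in_arc a \<theta>"
    unfolding in_arc_def by (intro exI[of _ "m - j"]) (simp add: algebra_simps)
next
  assume "in_arc a \<theta>"
  then obtain m :: int where "2*pi*m < \<theta>" "\<theta> < 2*pi*m + a"
    unfolding in_arc_def by blast
  then show "in_arc a (\<theta> + 2*pi*j)"
    unfolding in_arc_def by (intro exI[of _ "m + j"]) (simp add: algebra_simps)
qed

lemma in_arc_reflect: "in_arc a (a - \<theta>) \<longleftrightarrow> in_arc a \<theta>"
proof -
  have "in_arc a (a - \<theta>)" if arc: "in_arc a \<theta>" for \<theta>
  proof -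
    obtain m :: int where "2*pi*m < \<theta>" "\<theta> < 2*pi*m + a"
      using arc unfolding in_arc_def by blast
    then show ?thesis
      unfolding in_arc_def by (intro exI[of _ "-m"]) simp
  qed
  from this this[of "a - \<theta>"] show ?thesis by auto
qed

lemma progression_enters_arc_pos:
  fixes a c d :: real
  assumes "0 < d" "d < a" "a \<le> 2*pi"
  shows "\<exists>k::nat. real k * d \<le> 2*pi - a + d \<and> in_arc a (c + real k * d)"
proof -
  define m where "m = \<lfloor>(c - a) / (2*pi)\<rfloor> + 1"
  have "2*pi*(m - 1) \<le> c - a" "c - a < 2*pi*m"
    unfolding m_def using floor_divide_lower[of "2*pi" "c - a"] floor_divide_upper[of "2*pi" "c - a"]
    by (simp_all add: algebra_simps)
  then have m: "2*pi*m - 2*pi + a \<le> c" "c < 2*pi*m + a"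
    by (simp_all add: algebra_simps)
  show ?thesis
  proof (cases "2*pi*m < c")
    case True
    then show ?thesis
      using m assms unfolding in_arc_def by (intro exI[of _ 0]) auto
  next
    case False
    then obtain k :: nat where k: "2*pi*m < c + real k * d" "c + real k * d \<le> 2*pi*m + d"
      using exists_lattice_point_in_interval[OF \<open>0 < d\<close>, of c "2*pi*m"] by auto
    then have "in_arc a (c + real k * d)"
      unfolding in_arc_def using \<open>d < a\<close> by (intro exI[of _ m]) simp
    moreover have "real k * d \<le> 2*pi - a + d" using k m by linarith
    ultimately show ?thesis by blast
  qed
qed

text \<open>The points \<open>c + k d\<close> cannot jump over an arc longer than the step \<open>|d|\<close>, so the
  first full turn already meets it.\<close>
lemma progression_enters_arc:
  fixes a c d :: real
  assumes "d \<noteq> 0" "\<bar>d\<bar> < a" "a \<le> 2*pi"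
  shows "\<exists>k::nat. real k * \<bar>d\<bar> \<le> 2*pi - a + \<bar>d\<bar> \<and> in_arc a (c + real k * d)"
proof (cases "0 < d")
  case True
  then show ?thesis using progression_enters_arc_pos[of d a c] assms by simp
next
  case False
  then obtain k :: nat where k: "real k * (-d) \<le> 2*pi - a + (-d)" "in_arc a ((a - c) + real k * (-d))"
    using progression_enters_arc_pos[of "-d" a "a - c"] assms by auto
  have "(a - c) + real k * (-d) = a - (c + real k * d)" by simp
  then have "in_arc a (c + real k * d)"
    using k(2) in_arc_reflect by metis
  then show ?thesis
    using False k(1) by (intro exI[of _ k]) simp
qed

lemma cis_in_moving_set:
  assumes "0 < \<epsilon>" "0 \<le> t" "in_arc a (\<alpha> - theta0 t0 v t)"
  shows "(t, cis \<alpha>) \<in> moving_set \<epsilon> a t0 v"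
proof -
  obtain m :: int where m: "2*pi*m < \<alpha> - theta0 t0 v t" "\<alpha> - theta0 t0 v t < 2*pi*m + a"
    using assms(3) unfolding in_arc_def by blast
  have "cis \<alpha> = cis (\<alpha> - 2*pi*m) * cis (2*pi*m)"
    unfolding cis_mult by simp
  also have "cis (2*pi*m) = 1" by simp
  finally have "cis \<alpha> = complex_of_real (norm (cis \<alpha>)) * cis (\<alpha> - 2*pi*m)"
    by simp
  then show ?thesis
    using assms m unfolding moving_set_def
    by (auto intro!: exI[of _ "\<alpha> - 2*pi*m"])
qed

lemma unit_circle_chord:
  fixes P u :: complex and L :: real
  assumes nP: "norm P = 1" and nu: "norm u = 1" and nQ: "norm (P + L *\<^sub>R (u * P)) = 1"
    and "0 < L"
  shows "L = -2 * Re u" "P + L *\<^sub>R (u * P) = -(u^2) * P"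
    "u * P - (2 * ((u * P) \<bullet> (-(u^2) * P))) *\<^sub>R (-(u^2) * P) = u * (-(u^2) * P)"
proof -
  obtain a b where u: "u = Complex a b" by (cases u)
  obtain c d where P: "P = Complex c d" by (cases P)
  have ab: "a^2 + b^2 = 1" using nu u by (simp add: cmod_def)
  have cd: "c^2 + d^2 = 1" using nP P by (simp add: cmod_def)
  have "(c + L*(a*c - b*d))^2 + (d + L*(a*d + b*c))^2 = 1"
    using nQ u P by (simp add: cmod_def scaleR_conv_of_real algebra_simps)
  moreover have "(c + L*(a*c - b*d))^2 + (d + L*(a*d + b*c))^2
      = (c^2 + d^2) * (1 + 2*L*a + L^2*(a^2 + b^2))"
    by algebra
  ultimately have "1 + 2*L*a + L^2 = 1"
    using ab cd by simp
  then have "L * (L + 2*a) = 0"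
    by (simp add: algebra_simps power2_eq_square)
  then show L: "L = -2 * Re u" using \<open>0 < L\<close> u by simp
  show "P + L *\<^sub>R (u * P) = -(u^2) * P"
    unfolding L u P using ab
    by (simp add: complex_eq_iff scaleR_conv_of_real power2_eq_square algebra_simps) algebra
  show "u * P - (2 * ((u * P) \<bullet> (-(u^2) * P))) *\<^sub>R (-(u^2) * P) = u * (-(u^2) * P)"
    unfolding u P inner_complex_def using ab cd
    by (simp add: complex_eq_iff scaleR_conv_of_real power2_eq_square algebra_simps) algebra
qed

lemma affine_on_open_interval_closure:
  fixes x :: "real \<Rightarrow> complex"
  assumes cont: "continuous_on UNIV x" and "t1 < t2"
    and aff: "\<forall>\<tau>\<in>{t1<..<t2}. x \<tau> = p + \<tau> *\<^sub>R q"
  shows "x t1 = p + t1 *\<^sub>R q" "x t2 = p + t2 *\<^sub>R q"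
    "(x has_vector_derivative q) (at_right t1)" "(x has_vector_derivative q) (at_left t2)"
proof -
  let ?g = "\<lambda>\<tau>. p + \<tau> *\<^sub>R q"
  have lim: "(x \<longlongrightarrow> x t) F" if "F = at_right t \<or> F = at_left t" for t F
    using cont that by (metis UNIV_I continuous_on_def filterlim_at_split open_UNIV tendsto_within_open)
  have right: "\<forall>\<^sub>F \<tau> in at_right t1. x \<tau> = ?g \<tau>"
    unfolding eventually_at_right[OF \<open>t1 < t2\<close>] using aff \<open>t1 < t2\<close> by (intro exI[of _ t2]) auto
  have left: "\<forall>\<^sub>F \<tau> in at_left t2. x \<tau> = ?g \<tau>"
    unfolding eventually_at_left[OF \<open>t1 < t2\<close>] using aff \<open>t1 < t2\<close> by (intro exI[of _ t1]) auto
  have "(x \<longlongrightarrow> ?g t1) (at_right t1)"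
    using tendsto_cong[OF right] by (simp add: tendsto_intros)
  then show x1: "x t1 = ?g t1"
    using lim tendsto_unique[OF trivial_limit_at_right_real] by blast
  have "(x \<longlongrightarrow> ?g t2) (at_left t2)"
    using tendsto_cong[OF left] by (simp add: tendsto_intros)
  then show x2: "x t2 = ?g t2"
    using lim tendsto_unique[OF trivial_limit_at_left_real] by blast
  have g: "(?g has_vector_derivative q) (at y within S)" for y S
    unfolding has_vector_derivative_def by (auto intro!: derivative_eq_intros)
  have "(x has_vector_derivative q) (at t1 within {t1..})"
    by (rule has_vector_derivative_transform_within[OF g, of "t2 - t1"])
       (use \<open>t1 < t2\<close> aff x1 in \<open>auto simp: dist_real_def le_less\<close>)
  then show "(x has_vector_derivative q) (at_right t1)"
    by (rule has_vector_derivative_within_subset) auto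
  have "(x has_vector_derivative q) (at t2 within {..t2})"
    by (rule has_vector_derivative_transform_within[OF g, of "t2 - t1"])
       (use \<open>t1 < t2\<close> aff x2 in \<open>auto simp: dist_real_def le_less\<close>)
  then show "(x has_vector_derivative q) (at_left t2)"
    by (rule has_vector_derivative_within_subset) auto
qed

locale billiard_path =
  fixes x :: "real \<Rightarrow> complex" and R :: "real set"
  assumes continuous: "continuous_on UNIV x"
    and in_disk: "\<And>t. norm (x t) \<le> 1"
    and on_circle: "\<And>t. t \<in> R \<Longrightarrow> norm (x t) = 1"
    and locally_finite: "\<And>a b. finite (R \<inter> {a..b})"
    and affine_between: "\<And>a b. a < b \<Longrightarrow> {a<..<b} \<inter> R = {} \<Longrightarrow>
      \<exists>p v. norm v = 1 \<and> (\<forall>t\<in>{a<..<b}. x t = p + t *\<^sub>R v)"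
    and reflection: "\<And>t. t \<in> R \<Longrightarrow> \<exists>vm vp. (x has_vector_derivative vm) (at_left t) \<and>
      (x has_vector_derivative vp) (at_right t) \<and> vp = vm - (2 * (vm \<bullet> x t)) *\<^sub>R x t"

lemma billiard_ray_imp_billiard_path:
  assumes "billiard_ray x"
  obtains R where "billiard_path x R"
proof -
  from assms obtain R where "continuous_on UNIV x" "\<forall>t. norm (x t) \<le> 1"
    "\<forall>t\<in>R. norm (x t) = 1" "\<forall>a b. finite (R \<inter> {a..b})"
    "\<forall>a b. a < b \<and> {a<..<b} \<inter> R = {} \<longrightarrow>
      (\<exists>p v. norm v = 1 \<and> (\<forall>t\<in>{a<..<b}. x t = p + t *\<^sub>R v))"
    "\<forall>t\<in>R. \<exists>vm vp. (x has_vector_derivative vm) (at_left t) \<and>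
      (x has_vector_derivative vp) (at_right t) \<and> vp = vm - (2 * (vm \<bullet> x t)) *\<^sub>R x t"
    unfolding billiard_ray_def by blast
  then have "billiard_path x R" by unfold_locales auto
  then show ?thesis by (rule that)
qed

context billiard_path
begin

lemma reflection_in_interval:
  assumes "a + 3 \<le> b"
  shows "\<exists>r\<in>R. a < r \<and> r < b"
proof (rule ccontr)
  assume "\<not> ?thesis"
  then have "{a<..<b} \<inter> R = {}" by auto
  then obtain p q where q: "norm q = 1" and aff: "\<forall>t\<in>{a<..<b}. x t = p + t *\<^sub>R q"
    using affine_between[of a b] assms by auto
  have "x (a + 11/4) - x (a + 1/4) = (a + 11/4) *\<^sub>R q - (a + 1/4) *\<^sub>R q"
    using aff assms by simp
  also have "\<dots> = ((a + 11/4) - (a + 1/4)) *\<^sub>R q"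
    by (simp only: scaleR_diff_left)
  finally have "x (a + 11/4) - x (a + 1/4) = (5/2) *\<^sub>R q" by simp
  then have "norm (x (a + 11/4) - x (a + 1/4)) = 5/2" using q by simp
  moreover have "norm (x (a + 11/4) - x (a + 1/4)) \<le> 2"
    using norm_triangle_ineq4[of "x (a + 11/4)" "x (a + 1/4)"] in_disk[of "a + 11/4"] in_disk[of "a + 1/4"]
    by linarith
  ultimately show False by simp
qed

lemma next_reflection:
  assumes "t \<in> R"
  obtains t' where "t' \<in> R" "t < t'" "{t<..<t'} \<inter> R = {}"
proof -
  define F where "F = R \<inter> {t<..<t+3}"
  have "finite F" unfolding F_def by (rule finite_subset[OF _ locally_finite[of t "t+3"]]) auto
  moreover have "F \<noteq> {}" using reflection_in_interval[of t "t+3"] unfolding F_def by auto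
  ultimately have min: "Min F \<in> F" "\<And>r. r \<in> F \<Longrightarrow> Min F \<le> r" by simp_all
  have "r \<notin> R" if "t < r" "r < Min F" for r
    using min that unfolding F_def by force
  moreover have "Min F \<in> R" "t < Min F" using min(1) unfolding F_def by auto
  ultimately show ?thesis by (intro that[of "Min F"]) auto
qed

text \<open>Velocities leaving the circle are written as \<open>u * x t\<close>: then every chord has the
  same factor \<open>u\<close>, and it rotates the position by \<open>-u\<^sup>2\<close>.\<close>
lemma reflection_step:
  assumes "t \<in> R" and d: "(x has_vector_derivative (u * x t)) (at_right t)"
  shows "norm u = 1" "Re u < 0" "t - 2 * Re u \<in> R" "x (t - 2 * Re u) = -(u^2) * x t"
    "(x has_vector_derivative (u * x (t - 2 * Re u))) (at_right (t - 2 * Re u))"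
proof -
  obtain t' where t'R: "t' \<in> R" and "t < t'" and empty: "{t<..<t'} \<inter> R = {}"
    using next_reflection[OF \<open>t \<in> R\<close>] by blast
  obtain p q where q: "norm q = 1" and aff: "\<forall>\<tau>\<in>{t<..<t'}. x \<tau> = p + \<tau> *\<^sub>R q"
    using affine_between[OF \<open>t < t'\<close> empty] by auto
  note chord = affine_on_open_interval_closure[OF continuous \<open>t < t'\<close> aff]
  have uq: "u * x t = q"
    using vector_derivative_unique_within[OF trivial_limit_at_right_real d chord(3)] .
  have nP: "norm (x t) = 1" using on_circle[OF \<open>t \<in> R\<close>] .
  moreover have "norm (u * x t) = 1" using uq q by simp
  ultimately show nu: "norm u = 1" by (simp add: norm_mult)
  have x': "x t' = x t + (t' - t) *\<^sub>R (u * x t)"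
    using chord(1,2) uq by (simp add: algebra_simps)
  have "0 < t' - t" using \<open>t < t'\<close> by simp
  note circle = unit_circle_chord[OF nP nu, of "t' - t", folded x', OF on_circle[OF t'R] this]
  have t': "t' = t - 2 * Re u" using circle(1) \<open>t < t'\<close> by simp
  show "Re u < 0" using circle(1) \<open>t < t'\<close> by simp
  show "t - 2 * Re u \<in> R" using t'R t' by simp
  show "x (t - 2 * Re u) = -(u^2) * x t" using circle(2) x' t' by simp
  obtain vm vp where vm: "(x has_vector_derivative vm) (at_left t')"
    and vp: "(x has_vector_derivative vp) (at_right t')"
    and vp_eq: "vp = vm - (2 * (vm \<bullet> x t')) *\<^sub>R x t'"
    using reflection[OF t'R] by auto
  have "vm = q" using vector_derivative_unique_within[OF trivial_limit_at_left_real vm chord(4)] .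
  then have "vp = u * x t'" using vp_eq circle(2,3) uq x' by simp
  then show "(x has_vector_derivative (u * x (t - 2 * Re u))) (at_right (t - 2 * Re u))"
    using vp t' by simp
qed

lemma reflection_iterate:
  assumes "t \<in> R" and "(x has_vector_derivative (u * x t)) (at_right t)"
  shows "t - real k * (2 * Re u) \<in> R \<and> x (t - real k * (2 * Re u)) = (-(u^2))^k * x t \<and>
    (x has_vector_derivative (u * x (t - real k * (2 * Re u)))) (at_right (t - real k * (2 * Re u)))"
proof (induction k)
  case 0
  then show ?case using assms by simp
next
  case (Suc k)
  let ?s = "t - real k * (2 * Re u)"
  have s: "?s \<in> R" and xs: "x ?s = (-(u^2))^k * x t"
    and ds: "(x has_vector_derivative (u * x ?s)) (at_right ?s)"
    using Suc.IH by auto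
  have e: "t - real (Suc k) * (2 * Re u) = ?s - 2 * Re u" by (simp add: algebra_simps)
  have "x (?s - 2 * Re u) = (-(u^2))^Suc k * x t" using reflection_step(4)[OF s ds] xs by simp
  then show ?case unfolding e using reflection_step(3,5)[OF s ds] by simp
qed

end

lemma chord_factor_angle:
  fixes u :: complex
  assumes "norm u = 1" "Re u < 0"
  obtains \<phi> where "0 < \<phi>" "\<phi> < pi" "sin \<phi> = - Re u" "-(u^2) = cis (2*\<phi>)"
proof
  have nu: "(Re u)^2 + (Im u)^2 = 1" using assms(1) by (simp add: cmod_def)
  have Im: "-1 \<le> Im u" "Im u \<le> 1" using abs_Im_le_cmod[of u] assms(1) by linarith+
  define \<phi> where "\<phi> = arccos (Im u)"
  have cos: "cos \<phi> = Im u" unfolding \<phi>_def using Im by (simp add: cos_arccos)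
  have "sin \<phi> = sqrt (1 - (Im u)^2)"
    unfolding \<phi>_def using Im by (simp add: sin_arccos)
  also have "1 - (Im u)^2 = (Re u)^2" using nu by simp
  finally have "sin \<phi> = \<bar>Re u\<bar>" by simp
  then show sin: "sin \<phi> = - Re u" using assms(2) by simp
  have "0 \<le> \<phi>" "\<phi> \<le> pi" unfolding \<phi>_def using Im by (auto intro: arccos_lbound arccos_ubound)
  then show "0 < \<phi>" "\<phi> < pi" using sin assms(2) by (auto simp: le_less)
  show "-(u^2) = cis (2*\<phi>)"
    unfolding complex_eq_iff cis.sel cos_double sin_double cos sin by (simp add: power2_eq_square)
qed

lemma billiard_ray_reflection_points:
  assumes "billiard_ray x"
  obtains \<phi> L s \<gamma> where "0 < \<phi>" "\<phi> < pi" "L = 2 * sin \<phi>" "0 < s" "s \<le> L"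
    "\<And>k::nat. x (s + real k * L) = cis (\<gamma> + real k * (2*\<phi>))"
proof -
  obtain R where "billiard_path x R"
    using billiard_ray_imp_billiard_path[OF assms] .
  then interpret billiard_path x R .
  obtain t where tR: "t \<in> R" and "t < 0" using reflection_in_interval[of "-3" 0] by auto
  obtain vp where vp: "(x has_vector_derivative vp) (at_right t)" using reflection[OF tR] by auto
  have nx: "norm (x t) = 1" using on_circle[OF tR] .
  then have "x t \<noteq> 0" by auto
  define u where "u = vp / x t"
  have d: "(x has_vector_derivative (u * x t)) (at_right t)"
    using vp \<open>x t \<noteq> 0\<close> unfolding u_def by simp
  obtain \<phi> where \<phi>: "0 < \<phi>" "\<phi> < pi" "sin \<phi> = - Re u" "-(u^2) = cis (2*\<phi>)"
    using chord_factor_angle[OF reflection_step(1,2)[OF tR d]] by blast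
  define L where "L = 2 * sin \<phi>"
  have "0 < L" using \<phi> reflection_step(2)[OF tR d] unfolding L_def by simp
  obtain k1 :: nat where k1: "0 < t + real k1 * L" "t + real k1 * L \<le> L"
    using exists_lattice_point_in_interval[OF \<open>0 < L\<close>, of t 0] \<open>t < 0\<close> by auto
  define \<gamma> where "\<gamma> = Arg (x t)"
  have x\<gamma>: "x t = cis \<gamma>"
    unfolding \<gamma>_def using cis_Arg[OF \<open>x t \<noteq> 0\<close>] nx by (simp add: sgn_div_norm)
  have "x ((t + real k1 * L) + real k * L) = cis ((\<gamma> + real k1 * (2*\<phi>)) + real k * (2*\<phi>))"
    for k :: nat
  proof -
    have "(t + real k1 * L) + real k * L = t - real (k1 + k) * (2 * Re u)"
      unfolding L_def \<phi>(3) by (simp add: algebra_simps)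
    then have "x ((t + real k1 * L) + real k * L) = (-(u^2))^(k1 + k) * x t"
      using reflection_iterate[OF tR d, of "k1 + k"] by metis
    also have "\<dots> = cis (real (k1 + k) * (2*\<phi>)) * cis \<gamma>"
      by (simp only: \<phi>(4) x\<gamma> Complex.DeMoivre)
    also have "\<dots> = cis (\<gamma> + real (k1 + k) * (2*\<phi>))"
      unfolding cis_mult by (simp add: add.commute)
    finally show ?thesis by (simp add: algebra_simps)
  qed
  then show ?thesis using that \<phi> k1 L_def by blast
qed

lemma reflection_points_hit_moving_set_before_t0:
  fixes x :: "real \<Rightarrow> complex" and j :: int
  assumes "0 < \<epsilon>" "a \<le> 2*pi" "0 < s" "0 < L" "s + 3*L < t0"
    and X: "\<And>k::nat. x (s + real k * L) = cis (\<gamma> + real k * \<delta>)"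
    and d: "d = \<delta> - 2*pi*j" "d \<noteq> 0" "\<bar>d\<bar> < a" "2*pi - a < 3*\<bar>d\<bar>"
  shows "\<exists>t\<in>{0<..<t0}. (t, x t) \<in> moving_set \<epsilon> a t0 v"
proof -
  obtain k :: nat where k: "real k * \<bar>d\<bar> \<le> 2*pi - a + \<bar>d\<bar>" and arc: "in_arc a (\<gamma> + real k * d)"
    using progression_enters_arc[OF d(2,3) \<open>a \<le> 2*pi\<close>, where c = \<gamma>] by blast
  have "real k * \<bar>d\<bar> < 4 * \<bar>d\<bar>" using k d(4) by linarith
  then have "real k \<le> 3" using d(2) by (simp add: mult_less_cancel_right)
  then have kL: "0 \<le> real k * L" "real k * L \<le> 3 * L"
    using \<open>0 < L\<close> by (auto intro: mult_right_mono)
  define t where "t = s + real k * L"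
  have "0 < t" "t < t0"
    unfolding t_def using kL \<open>0 < s\<close> \<open>s + 3*L < t0\<close> by linarith+
  have angle: "\<gamma> + real k * \<delta> - theta0 t0 v t = (\<gamma> + real k * d) + 2*pi*(int k * j)"
    using \<open>t < t0\<close> unfolding theta0_def d(1) by (simp add: algebra_simps)
  have "in_arc a (\<gamma> + real k * \<delta> - theta0 t0 v t)"
    unfolding angle in_arc_add_2pi_multiple by (rule arc)
  then have "(t, x t) \<in> moving_set \<epsilon> a t0 v"
    using cis_in_moving_set[OF \<open>0 < \<epsilon>\<close>] \<open>0 < t\<close> X unfolding t_def by simp
  then show ?thesis using \<open>0 < t\<close> \<open>t < t0\<close> by auto
qed

text \<open>From time \<open>t0\<close> on the window turns by \<open>v L\<close> between consecutive points, so in the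
  rotating frame the points advance by \<open>d\<close>; \<open>L \<le> 40 |d|\<close> bounds the time one turn takes.\<close>
lemma reflection_points_hit_moving_set_after_t0:
  fixes x :: "real \<Rightarrow> complex" and j :: int
  assumes "0 < \<epsilon>" "a \<le> 2*pi" "0 \<le> t0" "s \<le> t0" "0 < L" "L \<le> 4"
    and X: "\<And>k::nat. x (s + real k * L) = cis (\<gamma> + real k * \<delta>)"
    and d: "d = \<delta> - v * L - 2*pi*j" "d \<noteq> 0" "\<bar>d\<bar> < a" "L \<le> 40 * \<bar>d\<bar>"
  shows "\<exists>t\<in>{t0<..<t0 + 300}. (t, x t) \<in> moving_set \<epsilon> a t0 v"
proof -
  obtain k0 :: nat where k0: "t0 < s + real k0 * L" "s + real k0 * L \<le> t0 + L"
    using exists_lattice_point_in_interval[OF \<open>0 < L\<close> \<open>s \<le> t0\<close>] by blast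
  define c where "c = \<gamma> + real k0 * \<delta> - v * (s + real k0 * L - t0)"
  obtain k :: nat where k: "real k * \<bar>d\<bar> \<le> 2*pi - a + \<bar>d\<bar>" and arc: "in_arc a (c + real k * d)"
    using progression_enters_arc[OF d(2,3) \<open>a \<le> 2*pi\<close>, where c = c] by blast
  define t where "t = s + real (k0 + k) * L"
  have "real k * L \<le> 40 * (real k * \<bar>d\<bar>)"
    using mult_left_mono[OF d(4), of "real k"] by simp
  also have "\<dots> \<le> 40 * (2 * pi)" using k d(3) by linarith
  finally have "t < t0 + 300"
    using k0 \<open>L \<le> 4\<close> pi_bounds unfolding t_def by (simp add: distrib_right)
  have "0 \<le> real k * L" using \<open>0 < L\<close> by simp
  then have "t0 < t"
    using k0 unfolding t_def of_nat_add distrib_right by linarith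
  have theta: "theta0 t0 v t = v * ((s + real k0 * L - t0) + real k * L)"
    using \<open>t0 < t\<close> unfolding theta0_def t_def by (simp add: algebra_simps)
  have angle: "\<gamma> + real (k0 + k) * \<delta> - theta0 t0 v t = (c + real k * d) + 2*pi*(int k * j)"
    unfolding theta c_def d(1) by (simp add: algebra_simps)
  have "in_arc a (\<gamma> + real (k0 + k) * \<delta> - theta0 t0 v t)"
    unfolding angle in_arc_add_2pi_multiple by (rule arc)
  moreover have "0 \<le> t" using \<open>t0 < t\<close> \<open>0 \<le> t0\<close> by simp
  ultimately have "(t, cis (\<gamma> + real (k0 + k) * \<delta>)) \<in> moving_set \<epsilon> a t0 v"
    using cis_in_moving_set[OF \<open>0 < \<epsilon>\<close>] by blast
  moreover have "x t = cis (\<gamma> + real (k0 + k) * \<delta>)" unfolding t_def by (rule X)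
  ultimately have "(t, x t) \<in> moving_set \<epsilon> a t0 v" by simp
  then show ?thesis using \<open>t0 < t\<close> \<open>t < t0 + 300\<close> by auto
qed

locale rotating_window_setup =
  fixes \<epsilon> a t0 :: real
  assumes eps_pos: "0 < \<epsilon>" and a_gt: "4*pi/5 < a" and a_lt: "a < pi" and t0_gt: "2*pi < t0"
begin

abbreviation Q :: "(real \<times> complex) set" where
  "Q \<equiv> moving_set \<epsilon> a t0 (19/20)"

lemma a_le_2pi: "a \<le> 2*pi"
  using a_lt pi_gt_zero by linarith

lemma t0_pos: "0 < t0"
  using t0_gt pi_gt_zero by linarith

lemma reflection_points_hit_Q_after_t0:
  fixes x :: "real \<Rightarrow> complex" and j :: int
  assumes "s \<le> 4" "0 < L" "L \<le> 4"
    and X: "\<And>k::nat. x (s + real k * L) = cis (\<gamma> + real k * \<delta>)"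
    and d: "d = \<delta> - 19/20 * L - 2*pi*j" "d \<noteq> 0" "\<bar>d\<bar> < a" "L \<le> 40 * \<bar>d\<bar>"
  shows "\<exists>t\<in>{0<..<t0 + 300}. (t, x t) \<in> Q"
proof -
  have "s \<le> t0" using \<open>s \<le> 4\<close> t0_gt pi_bounds by linarith
  obtain t where "t \<in> {t0<..<t0 + 300}" "(t, x t) \<in> Q"
    using reflection_points_hit_moving_set_after_t0[OF eps_pos a_le_2pi less_imp_le[OF t0_pos]
        \<open>s \<le> t0\<close> \<open>0 < L\<close> \<open>L \<le> 4\<close> X d] by blast
  then show ?thesis using t0_pos by force
qed

lemma short_chord_hits_Q:
  fixes x :: "real \<Rightarrow> complex"
  assumes \<psi>: "7/10 \<le> pi - \<phi>" "pi - \<phi> \<le> 22/25" and chord: "L = 2 * sin \<phi>" "0 < s" "s \<le> L"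
    and X: "\<And>k::nat. x (s + real k * L) = cis (\<gamma> + real k * (2*\<phi>))"
  shows "\<exists>t\<in>{0<..<t0 + 300}. (t, x t) \<in> Q"
proof -
  have "sin (pi - \<phi>) \<le> sin (22/25)"
    using \<psi> pi_bounds by (intro sin_monotone_2pi_le) auto
  then have "L \<le> 771/500" using chord(1) sin_22_25_bounds by simp
  then have "s + 3*L < t0" using chord t0_gt pi_bounds by linarith
  have d: "\<bar>2*\<phi> - 2*pi*1\<bar> = 2*(pi - \<phi>)" using \<psi> by simp
  have "2*(pi - \<phi>) < a" using \<psi> a_gt pi_bounds by argo
  moreover have "2*pi - a < 3*(2*(pi - \<phi>))" using \<psi> a_gt pi_bounds by argo
  moreover have "0 < L" using chord by simp
  ultimately obtain t where "t \<in> {0<..<t0}" "(t, x t) \<in> Q"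
    using reflection_points_hit_moving_set_before_t0[OF eps_pos a_le_2pi \<open>0 < s\<close> \<open>0 < L\<close>
        \<open>s + 3*L < t0\<close> X refl, where j = 1 and v = "19/20"] \<psi> unfolding d by auto
  then show ?thesis by auto
qed

text \<open>\<open>\<delta> = 2\<phi> - (19/10) sin \<phi>\<close> is the turn per step in the rotating frame. If it is
  close to \<open>0\<close> modulo \<open>2\<pi>\<close> single steps are used; otherwise it is close to \<open>\<pi>\<close> and double
  steps are used, the gap keeping \<open>2\<delta>\<close> away from \<open>2\<pi>\<close>.\<close>
lemma chord_away_from_half_turn_hits_Q:
  fixes x :: "real \<Rightarrow> complex"
  assumes "0 < \<phi>" "\<phi> < pi" and chord: "L = 2 * sin \<phi>" "0 < s" "s \<le> L"
    and X: "\<And>k::nat. x (s + real k * L) = cis (\<gamma> + real k * (2*\<phi>))"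
    and gap: "1/20 \<le> \<bar>2*\<phi> - 19/10 * sin \<phi> - pi\<bar>"
  shows "\<exists>t\<in>{0<..<t0 + 300}. (t, x t) \<in> Q"
proof -
  define \<delta> where "\<delta> = 2*\<phi> - 19/10 * sin \<phi>"
  have sin: "0 < sin \<phi>" "sin \<phi> \<le> 1" "sin \<phi> \<le> \<phi>"
    using sin_gt_zero sin_x_le_x assms(1,2) by auto
  then have L: "0 < L" "L \<le> 2" "L \<le> 20 * \<delta>" using chord(1) unfolding \<delta>_def by auto
  have "s \<le> 4" using chord(3) L by linarith
  have \<delta>: "0 < \<delta>" "\<delta> < 2*pi" using sin assms(2) unfolding \<delta>_def by linarith+
  have turn: "\<delta> - 2*pi*j = 2*\<phi> - 19/20 * L - 2*pi*j" for j :: int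
    using chord(1) unfolding \<delta>_def by simp
  have "L \<le> 4" using L(2) by simp
  note after = reflection_points_hit_Q_after_t0[OF \<open>s \<le> 4\<close> L(1) \<open>L \<le> 4\<close> X turn]
  consider "\<delta> < a" | "2*pi - a < \<delta>" | "a \<le> \<delta>" "\<delta> \<le> 2*pi - a" by linarith
  then show ?thesis
  proof cases
    case 1
    have "\<delta> \<noteq> 0" "\<bar>\<delta>\<bar> < a" "L \<le> 40 * \<bar>\<delta>\<bar>"
      using 1 \<delta> L by simp_all
    then show ?thesis using after[of 0] by simp
  next
    case 2
    have "L \<le> 20 * (2*pi - \<delta>)"
      using sin assms(2) chord(1) unfolding \<delta>_def by argo
    moreover have "\<bar>\<delta> - 2*pi\<bar> = 2*pi - \<delta>" using \<delta> by simp
    ultimately have "\<delta> - 2*pi \<noteq> 0" "\<bar>\<delta> - 2*pi\<bar> < a" "L \<le> 40 * \<bar>\<delta> - 2*pi\<bar>"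
      using 2 \<delta> by simp_all
    then show ?thesis using after[of 1] by simp
  next
    case 3
    have X2: "x (s + real k * (2*L)) = cis (\<gamma> + real k * (4*\<phi>))" for k :: nat
      using X[of "2*k"] by (simp add: algebra_simps)
    have double: "\<bar>2*\<delta> - 2*pi\<bar> = 2 * \<bar>\<delta> - pi\<bar>" by (simp add: abs_if)
    have "\<bar>\<delta> - pi\<bar> \<le> pi - a" using 3 by linarith
    moreover have "2*pi - 2*a < a" using a_gt pi_gt_zero by linarith
    ultimately have less: "\<bar>2*\<delta> - 2*pi\<bar> < a" unfolding double by argo
    have "1/20 \<le> \<bar>\<delta> - pi\<bar>" using gap unfolding \<delta>_def .
    then have nonzero: "2*\<delta> - 2*pi \<noteq> 0" and bound: "2*L \<le> 40 * \<bar>2*\<delta> - 2*pi\<bar>"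
      using L(2) unfolding double by auto
    have eq: "2*\<delta> - 2*pi = 4*\<phi> - 19/20 * (2*L) - 2*pi*real_of_int 1"
      using chord(1) unfolding \<delta>_def by simp
    have "0 < 2*L" "2*L \<le> 4" using L by simp_all
    then show ?thesis
      by (rule reflection_points_hit_Q_after_t0[OF \<open>s \<le> 4\<close> _ _ X2 eq nonzero less bound])
  qed
qed

lemma billiard_ray_hits_Q:
  assumes "billiard_ray x"
  shows "\<exists>t\<in>{0<..<t0 + 300}. (t, x t) \<in> Q"
proof -
  obtain \<phi> L s \<gamma> where \<phi>: "0 < \<phi>" "\<phi> < pi" and chord: "L = 2 * sin \<phi>" "0 < s" "s \<le> L"
    and X: "\<And>k::nat. x (s + real k * L) = cis (\<gamma> + real k * (2*\<phi>))"
    by (rule billiard_ray_reflection_points[OF assms], rule that)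
  show ?thesis
  proof (cases "7/10 \<le> pi - \<phi> \<and> pi - \<phi> \<le> 22/25")
    case True
    then have "7/10 \<le> pi - \<phi>" "pi - \<phi> \<le> 22/25" by simp_all
    then show ?thesis by (rule short_chord_hits_Q[OF _ _ chord X])
  next
    case False
    then have "pi - \<phi> < 7/10 \<or> 22/25 < pi - \<phi>" by linarith
    then have "1/20 \<le> \<bar>pi - 2*(pi - \<phi>) - 19/10 * sin (pi - \<phi>)\<bar>"
      using \<phi>(2) by (intro rotation_gap_from_half_turn) simp_all
    moreover have "pi - 2*(pi - \<phi>) - 19/10 * sin (pi - \<phi>) = 2*\<phi> - 19/10 * sin \<phi> - pi"
      by simp
    ultimately have "1/20 \<le> \<bar>2*\<phi> - 19/10 * sin \<phi> - pi\<bar>" by (simp only:)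
    then show ?thesis by (rule chord_away_from_half_turn_hits_Q[OF \<phi> chord X])
  qed
qed

lemma gliding_ray_hits_Q:
  assumes "gliding_ray x"
  shows "\<exists>t\<in>{0<..<t0 + 300}. (t, x t) \<in> Q"
proof -
  obtain c \<sigma> where \<sigma>: "\<sigma> = 1 \<or> \<sigma> = -1" and x: "\<And>t. x t = cis (c + \<sigma> * t)"
    using assms unfolding gliding_ray_def by blast
  have X: "x (0 + real k * 1) = cis (c + real k * \<sigma>)" for k :: nat
    using x by (simp add: mult.commute)
  have "39/20 < a" using a_gt pi_bounds by argo
  then have d: "\<sigma> - 19/20 \<noteq> 0" "\<bar>\<sigma> - 19/20\<bar> < a" "1 \<le> 40 * \<bar>\<sigma> - 19/20\<bar>"
    using \<sigma> by auto
  have "\<sigma> - 19/20 = \<sigma> - 19/20 * 1 - 2*pi*real_of_int 0" by simp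
  moreover have "(0::real) \<le> 4" "(0::real) < 1" "(1::real) \<le> 4" by simp_all
  ultimately show ?thesis
    using reflection_points_hit_Q_after_t0[OF _ _ _ X _ d] by blast
qed

end

theorem proposition3p3:
  fixes \<epsilon> a t0 :: real
  assumes "0 < \<epsilon>" "\<epsilon> < 1" "4 * pi / 5 < a" "a < pi" "t0 > 2 * pi"
  shows "\<exists>v. 0 < v \<and> v < 1 \<and> T0 (moving_set \<epsilon> a t0 v) < \<infinity>"
proof -
  interpret rotating_window_setup \<epsilon> a t0
    using assms by unfold_locales simp_all
  have "GCC Q (t0 + 300)"
    unfolding GCC_def ray_def using billiard_ray_hits_Q gliding_ray_hits_Q by blast
  moreover have "0 < t0 + 300" using t0_pos by simp
  ultimately have "T0 Q \<le> ereal (t0 + 300)"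
    unfolding T0_def by (intro Inf_lower) auto
  then have "T0 Q < \<infinity>" by (rule le_less_trans) simp
  then show ?thesis by (intro exI[of _ "19/20"]) simp
qed

end
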